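(* Let $G=(V,E)$ be a multigraph with $|V|=s\ge 2$ vertices, and let $v\in V$. Suppose that $\deg(v)\ge 1$ and $\deg(u)\ge 3$ for all $u\in V\setminus\{v\}$. Then $G$ contains a path $(p_1,p_2,\dots,p_k)$ and a cycle $(c_1,c_2,\dots,c_\ell)$ such that $p_1=v$, $p_k=c_1$, $k\ge 1$, $\ell\ge 1$, and $k+\ell\le 4\log(s)$.
   Context: A multigraph is a graph that may contain parallel edges and (possibly parallel) self-loops. The degree of a vertex is the number of incident edges, where a self-loop contributes two to the degree. A path $(p_1,\dots,p_k)$ is a sequence of $k$ distinct vertices with consecutive ones adjacent (a path with $k=1$ is a single vertex). A cycle $(c_1,\dots,c_\ell)$ on $\ell$ vertices: for $\ell=1$ it is a self-loop at $c_1$, for $\ell=2$ it is a pair of parallel edges between $c_1$ and $c_2$, and for $\ell\ge3$ it is an ordinary cycle through distinct vertices $c_1,\dots,c_\ell$. Logarithms are base 2. *)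

theory Defs
  imports Complex_Main
begin

text \<open>Parallel edges are distinct identifiers with the same endpoints.\<close>

definition multigraph :: "'v set \<Rightarrow> 'e set \<Rightarrow> ('e \<Rightarrow> 'v \<times> 'v) \<Rightarrow> bool" where
  "multigraph V E ends \<longleftrightarrow> finite V \<and> finite E \<and>
     (\<forall>e\<in>E. fst (ends e) \<in> V \<and> snd (ends e) \<in> V)"

text \<open>Degree: number of edge-endpoint incidences; a self-loop counts twice.\<close>
definition degree :: "'e set \<Rightarrow> ('e \<Rightarrow> 'v \<times> 'v) \<Rightarrow> 'v \<Rightarrow> nat" where
  "degree E ends v = card {e\<in>E. fst (ends e) = v} + card {e\<in>E. snd (ends e) = v}"

definition joins :: "('e \<Rightarrow> 'v \<times> 'v) \<Rightarrow> 'e \<Rightarrow> 'v \<Rightarrow> 'v \<Rightarrow> bool" where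
  "joins ends e x y \<longleftrightarrow> ends e = (x, y) \<or> ends e = (y, x)"

definition adjacent :: "'e set \<Rightarrow> ('e \<Rightarrow> 'v \<times> 'v) \<Rightarrow> 'v \<Rightarrow> 'v \<Rightarrow> bool" where
  "adjacent E ends x y \<longleftrightarrow> (\<exists>e\<in>E. joins ends e x y)"

definition is_path :: "'v set \<Rightarrow> 'e set \<Rightarrow> ('e \<Rightarrow> 'v \<times> 'v) \<Rightarrow> 'v list \<Rightarrow> bool" where
  "is_path V E ends ps \<longleftrightarrow> ps \<noteq> [] \<and> set ps \<subseteq> V \<and> distinct ps \<and>
     (\<forall>i. Suc i < length ps \<longrightarrow> adjacent E ends (ps ! i) (ps ! Suc i))"

definition is_cycle :: "'v set \<Rightarrow> 'e set \<Rightarrow> ('e \<Rightarrow> 'v \<times> 'v) \<Rightarrow> 'v list \<Rightarrow> bool" where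
  "is_cycle V E ends cs \<longleftrightarrow> set cs \<subseteq> V \<and> distinct cs \<and>
     (case cs of
        [] \<Rightarrow> False
      | [c] \<Rightarrow> (\<exists>e\<in>E. ends e = (c, c))
      | [c1, c2] \<Rightarrow> (\<exists>e1\<in>E. \<exists>e2\<in>E. e1 \<noteq> e2 \<and> joins ends e1 c1 c2 \<and> joins ends e2 c1 c2)
      | _ \<Rightarrow> (\<forall>i < length cs. adjacent E ends (cs ! i) (cs ! ((Suc i) mod length cs))))"

end

theory Submission
  imports Defs
begin

text \<open>Consider non-backtracking walks starting at v. If all of them of length at most j have
  distinct vertices, then every such walk can be continued in at least two ways (the empty walk
  in at least one), so there are at least 2^j of length j + 1. Once 2^j exceeds the number s of
  vertices, two of these walks end at the same vertex; discarding their common last edges and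
  following one of them and then the other backwards gives a non-backtracking walk of length
  at most 2j + 2 that returns to v.
  On a non-backtracking walk with a repeated vertex, the first repetition splits the walk into
  a path from v and a cycle of total size at most the length of the walk plus one; a
  repetition after two steps is a cycle of two parallel edges precisely because the walk does
  not backtrack. Taking j about log s gives the bound; for s \<le> 7 a walk of length s suffices.\<close>

lemma successively_take: "successively P xs \<Longrightarrow> successively P (take n xs)"
  by (auto simp: successively_conv_nth)

lemma successively_drop: "successively P xs \<Longrightarrow> successively P (drop n xs)"
  by (auto simp: successively_conv_nth)

lemma not_distinct_if_hd_eq_last: "2 \<le> length xs \<Longrightarrow> hd xs = last xs \<Longrightarrow> \<not> distinct xs"
  by (cases xs) (auto split: if_splits)

lemma joins_sym: "joins ends e x y \<longleftrightarrow> joins ends e y x"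
  by (auto simp: joins_def)

lemma adjacent_sym: "adjacent E ends x y \<longleftrightarrow> adjacent E ends y x"
  by (auto simp: adjacent_def joins_sym)

lemma is_path_iff_successively:
  "is_path V E ends ps \<longleftrightarrow>
     ps \<noteq> [] \<and> set ps \<subseteq> V \<and> distinct ps \<and> successively (adjacent E ends) ps"
  by (simp add: is_path_def successively_conv_nth)

lemma is_path_rev [simp]: "is_path V E ends (rev ps) \<longleftrightarrow> is_path V E ends ps"
  by (simp add: is_path_iff_successively adjacent_sym[of E ends _ _] cong: successively_cong)

lemma is_path_take: "is_path V E ends ps \<Longrightarrow> 0 < n \<Longrightarrow> is_path V E ends (take n ps)"
  using set_take_subset[of n ps] by (auto simp: is_path_iff_successively intro: successively_take)

lemma is_path_drop: "is_path V E ends ps \<Longrightarrow> n < length ps \<Longrightarrow> is_path V E ends (drop n ps)"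
  using set_drop_subset[of n ps] by (auto simp: is_path_iff_successively intro: successively_drop)

lemma is_cycle_loop: "e \<in> E \<Longrightarrow> ends e = (c, c) \<Longrightarrow> c \<in> V \<Longrightarrow> is_cycle V E ends [c]"
  by (auto simp: is_cycle_def)

lemma is_cycle_parallel:
  assumes "e1 \<in> E" "e2 \<in> E" "e1 \<noteq> e2" "joins ends e1 c1 c2" "joins ends e2 c1 c2"
    and "c1 \<noteq> c2" "c1 \<in> V" "c2 \<in> V"
  shows "is_cycle V E ends [c1, c2]"
  using assms by (auto simp: is_cycle_def)

lemma is_cycle_if_closed_path:
  assumes path: "is_path V E ends cs" and long: "3 \<le> length cs"
    and closing: "adjacent E ends (last cs) (hd cs)"
  shows "is_cycle V E ends cs"
proof -
  have "adjacent E ends (cs ! i) (cs ! (Suc i mod length cs))" if "i < length cs" for i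
  proof (cases "Suc i < length cs")
    case True
    then show ?thesis using path by (simp add: is_path_def)
  next
    case False
    then have "length cs = Suc i" using that by simp
    moreover have "cs \<noteq> []" using long by auto
    ultimately have "cs ! i = last cs" "cs ! (Suc i mod length cs) = hd cs"
      by (simp_all add: last_conv_nth hd_conv_nth)
    then show ?thesis using closing by simp
  qed
  moreover obtain a b c rest where "cs = a # b # c # rest"
    using long by (metis Suc_le_length_iff numeral_3_eq_3)
  ultimately show ?thesis using path by (simp add: is_cycle_def is_path_def)
qed

definition dart_rev :: "'e \<times> bool \<Rightarrow> 'e \<times> bool" where
  "dart_rev d = (fst d, \<not> snd d)"

lemma dart_rev_rev [simp]: "dart_rev (dart_rev d) = d"
  and fst_dart_rev [simp]: "fst (dart_rev d) = fst d"
  and dart_rev_eq_iff [simp]: "dart_rev d = dart_rev d' \<longleftrightarrow> d = d'"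
  by (auto simp: dart_rev_def prod_eq_iff)

locale rooted_multigraph =
  fixes V :: "'v set" and E :: "'e set" and ends :: "'e \<Rightarrow> 'v \<times> 'v" and v :: 'v
  assumes multigraph: "multigraph V E ends" and root_in_V: "v \<in> V"
begin

text \<open>A dart (e, b) is the edge e traversed from fst (ends e) to snd (ends e) if b, and in
  the opposite direction otherwise; a self-loop thus gives two darts, as it counts twice
  in the degree.\<close>

definition dart_tail :: "'e \<times> bool \<Rightarrow> 'v" where
  "dart_tail d = (if snd d then fst (ends (fst d)) else snd (ends (fst d)))"

definition dart_head :: "'e \<times> bool \<Rightarrow> 'v" where
  "dart_head d = (if snd d then snd (ends (fst d)) else fst (ends (fst d)))"

definition nb_step :: "'e \<times> bool \<Rightarrow> 'e \<times> bool \<Rightarrow> bool" where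
  "nb_step d d' \<longleftrightarrow> dart_tail d = dart_head d' \<and> d \<noteq> dart_rev d'"

text \<open>Non-backtracking walks starting at v are stored in reverse: the last dart leaves v and
  each dart is traversed right after its successor in the list, so walks grow by Cons.\<close>

definition nb_walk :: "('e \<times> bool) list \<Rightarrow> bool" where
  "nb_walk w \<longleftrightarrow> set w \<subseteq> E \<times> UNIV \<and> successively nb_step w \<and>
     (w \<noteq> [] \<longrightarrow> dart_tail (last w) = v)"

definition walk_end :: "('e \<times> bool) list \<Rightarrow> 'v" where
  "walk_end w = (if w = [] then v else dart_head (hd w))"

definition walk_verts :: "('e \<times> bool) list \<Rightarrow> 'v list" where
  "walk_verts w = map dart_head w @ [v]"

definition has_lollipop :: "nat \<Rightarrow> bool" where
  "has_lollipop N \<longleftrightarrow> (\<exists>ps cs. is_path V E ends ps \<and> is_cycle V E ends cs \<and>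
     hd ps = v \<and> last ps = hd cs \<and> length ps \<ge> 1 \<and> length cs \<ge> 1 \<and>
     length ps + length cs \<le> N)"

lemma finite_V: "finite V"
  using multigraph by (simp add: multigraph_def)

lemma dart_tail_rev [simp]: "dart_tail (dart_rev d) = dart_head d"
  and dart_head_rev [simp]: "dart_head (dart_rev d) = dart_tail d"
  by (auto simp: dart_tail_def dart_head_def dart_rev_def)

lemma dart_joins: "joins ends (fst d) (dart_tail d) (dart_head d)"
  by (cases "ends (fst d)") (auto simp: joins_def dart_tail_def dart_head_def)

lemma dart_adjacent: "fst d \<in> E \<Longrightarrow> adjacent E ends (dart_tail d) (dart_head d)"
  unfolding adjacent_def using dart_joins[of d] by (rule bexI)

lemma dart_head_in_V: "fst d \<in> E \<Longrightarrow> dart_head d \<in> V"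
  and dart_tail_in_V: "fst d \<in> E \<Longrightarrow> dart_tail d \<in> V"
  using multigraph by (auto simp: multigraph_def dart_head_def dart_tail_def)

lemma walk_end_Nil [simp]: "walk_end [] = v"
  by (simp add: walk_end_def)

lemma walk_end_Cons [simp]: "walk_end (d # w) = dart_head d"
  by (simp add: walk_end_def)

lemma nb_walk_Cons:
  "nb_walk (d # w) \<longleftrightarrow>
     nb_walk w \<and> fst d \<in> E \<and> dart_tail d = walk_end w \<and> (w \<noteq> [] \<longrightarrow> d \<noteq> dart_rev (hd w))"
  by (cases w) (auto simp: nb_walk_def nb_step_def mem_Times_iff)

lemma walk_verts_simps [simp]:
  "hd (walk_verts w) = walk_end w" "walk_verts w ! 0 = walk_end w" "last (walk_verts w) = v"
  "length (walk_verts w) = Suc (length w)" "walk_verts w \<noteq> []"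
  by (cases w; simp add: walk_verts_def walk_end_def)+

lemma walk_verts_subset: "nb_walk w \<Longrightarrow> set (walk_verts w) \<subseteq> V"
  using root_in_V dart_head_in_V by (auto simp: nb_walk_def walk_verts_def)

lemma walk_end_in_V: "nb_walk w \<Longrightarrow> walk_end w \<in> V"
  using walk_verts_subset hd_in_set[of "walk_verts w"] by auto

lemma is_path_walk_verts:
  assumes "nb_walk w" and "distinct (walk_verts w)"
  shows "is_path V E ends (walk_verts w)"
proof -
  have in_E: "fst d \<in> E" if "d \<in> set w" for d
    using assms that by (auto simp: nb_walk_def)
  have "successively nb_step w" using assms by (simp add: nb_walk_def)
  then have "successively (\<lambda>d d'. adjacent E ends (dart_head d) (dart_head d')) w"
    by (rule successively_mono) (metis in_E nb_step_def adjacent_sym dart_adjacent)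
  moreover have "w \<noteq> [] \<Longrightarrow> adjacent E ends (dart_head (last w)) v"
    using assms in_E[of "last w"] unfolding nb_walk_def
    by (metis adjacent_sym dart_adjacent last_in_set)
  ultimately have "successively (adjacent E ends) (walk_verts w)" unfolding walk_verts_def
    by (cases "w = []") (auto simp: successively_append_iff successively_map last_map)
  then show ?thesis using assms walk_verts_subset by (simp add: is_path_iff_successively)
qed

lemma has_lollipop_mono: "has_lollipop N \<Longrightarrow> N \<le> M \<Longrightarrow> has_lollipop M"
  unfolding has_lollipop_def using le_trans by blast

lemma is_cycle_closed_by_dart:
  assumes walk: "nb_walk (d # u)" and dist: "distinct (walk_verts u)"
    and p: "p < length (walk_verts u)" "walk_verts u ! p = dart_head d"
  shows "is_cycle V E ends (rev (take (Suc p) (walk_verts u)))"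
proof -
  define ys where "ys = walk_verts u"
  define cs where "cs = rev (take (Suc p) ys)"
  have u: "nb_walk u" and d_E: "fst d \<in> E" and d_tail: "dart_tail d = ys ! 0"
    using walk by (simp_all add: nb_walk_Cons ys_def)
  have path: "is_path V E ends cs"
    using is_path_walk_verts[OF u dist] by (simp add: cs_def ys_def is_path_take)
  have hd_cs: "hd cs = dart_head d"
    using p by (simp add: cs_def ys_def hd_rev take_Suc_conv_app_nth)
  have last_cs: "last cs = dart_tail d"
    using d_tail by (simp add: cs_def ys_def last_rev hd_conv_nth)
  consider "p = 0" | "p = 1" | "2 \<le> p" by linarith
  then have "is_cycle V E ends cs"
  proof cases
    case 1
    then have "cs = [dart_tail d]" "dart_head d = dart_tail d"
      using p d_tail by (simp_all add: cs_def ys_def take_Suc_conv_app_nth)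
    moreover from this(2) have "ends (fst d) = (dart_tail d, dart_tail d)"
      by (cases "ends (fst d)") (auto simp: dart_tail_def dart_head_def split: if_splits)
    ultimately show ?thesis
      using d_E dart_tail_in_V[OF d_E] by (simp add: is_cycle_loop)
  next
    case 2
    then obtain d' u' where u_Cons: "u = d' # u'" using p by (cases u) auto
    have d'_E: "fst d' \<in> E" and d'_tail: "dart_tail d' = walk_end u'"
      using u u_Cons by (simp_all add: nb_walk_Cons)
    have "ys = dart_head d' # walk_verts u'" by (simp add: ys_def u_Cons walk_verts_def)
    then have "ys ! 0 = dart_head d'" "ys ! 1 = dart_tail d'" using d'_tail by simp_all
    then have d'_ends: "dart_head d' = dart_tail d" "dart_tail d' = dart_head d"
      using p 2 d_tail by (simp_all add: ys_def)
    have "cs = [ys ! 1, ys ! 0]"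
      using 2 p by (simp add: cs_def ys_def take_Suc_conv_app_nth)
    then have cs: "cs = [dart_head d, dart_tail d]"
      using 2 p d_tail by (simp add: ys_def)
    then have distinct_ends: "dart_head d \<noteq> dart_tail d"
      using path by (simp add: is_path_def)
    have "fst d \<noteq> fst d'"
    proof
      assume "fst d = fst d'"
      moreover have "d \<noteq> dart_rev d'" using walk u_Cons by (simp add: nb_walk_Cons)
      ultimately have "d = d'" by (auto simp: dart_rev_def prod_eq_iff)
      then show False using d'_ends distinct_ends by simp
    qed
    moreover have "joins ends (fst d) (dart_head d) (dart_tail d)"
      and "joins ends (fst d') (dart_head d) (dart_tail d)"
      using dart_joins[of d] dart_joins[of d'] d'_ends by (simp_all add: joins_sym)
    ultimately show ?thesis
      using cs d_E d'_E distinct_ends path by (auto simp: is_path_def intro: is_cycle_parallel)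
  next
    case 3
    then have "3 \<le> length cs" using p by (simp add: cs_def ys_def)
    moreover have "adjacent E ends (last cs) (hd cs)"
      using dart_adjacent[OF d_E] hd_cs last_cs by simp
    ultimately show ?thesis using path by (simp add: is_cycle_if_closed_path)
  qed
  then show ?thesis by (simp add: cs_def ys_def)
qed

lemma has_lollipop_if_not_distinct:
  "nb_walk w \<Longrightarrow> \<not> distinct (walk_verts w) \<Longrightarrow> has_lollipop (Suc (length w))"
proof (induction w)
  case Nil
  then show ?case by (simp add: walk_verts_def)
next
  case (Cons d u)
  have u: "nb_walk u" using Cons.prems(1) by (simp add: nb_walk_Cons)
  show ?case
  proof (cases "distinct (walk_verts u)")
    case False
    with Cons.IH u show ?thesis by (auto elim: has_lollipop_mono)
  next
    case True
    define ys where "ys = walk_verts u"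
    have "walk_verts (d # u) = dart_head d # ys" by (simp add: ys_def walk_verts_def)
    then have "dart_head d \<in> set ys" using Cons.prems(2) True by (simp add: ys_def)
    then obtain p where p: "p < length ys" "ys ! p = dart_head d"
      by (auto simp: in_set_conv_nth)
    define ps where "ps = rev (drop p ys)"
    define cs where "cs = rev (take (Suc p) ys)"
    have "is_path V E ends ps"
      using is_path_walk_verts[OF u True] p(1) by (simp add: ps_def ys_def is_path_drop)
    moreover have "is_cycle V E ends cs"
      using is_cycle_closed_by_dart Cons.prems(1) True p by (simp add: cs_def ys_def)
    moreover have "hd ps = v" "last ps = hd cs"
      using p by (auto simp: ps_def cs_def ys_def hd_rev last_rev hd_drop_conv_nth
          take_Suc_conv_app_nth)
    moreover have "length ps \<ge> 1" "length cs \<ge> 1"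
      "length ps + length cs = Suc (Suc (length u))"
      using p by (simp_all add: ps_def cs_def ys_def)
    ultimately show ?thesis
      unfolding has_lollipop_def by (intro exI[of _ ps] exI[of _ cs]) simp
  qed
qed

lemma not_distinct_if_closed: "w \<noteq> [] \<Longrightarrow> walk_end w = v \<Longrightarrow> \<not> distinct (walk_verts w)"
  by (intro not_distinct_if_hd_eq_last) (auto simp: Suc_le_eq)

lemma nb_step_rev: "nb_step d d' \<Longrightarrow> nb_step (dart_rev d') (dart_rev d)"
  unfolding nb_step_def by (metis dart_head_rev dart_tail_rev dart_rev_rev)

lemma successively_nb_step_reverse:
  "successively nb_step w \<Longrightarrow> successively nb_step (map dart_rev (rev w))"
  unfolding successively_map successively_rev by (erule successively_mono) (rule nb_step_rev)

lemma nb_walk_splice: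
  assumes w1: "nb_walk (d1 # u1)" and w2: "nb_walk (d2 # u2)"
    and "d1 \<noteq> d2" "dart_head d1 = dart_head d2"
  shows "nb_walk (map dart_rev (rev (d2 # u2)) @ d1 # u1)"
proof -
  have "successively nb_step (map dart_rev (rev (d2 # u2)))"
    using w2 successively_nb_step_reverse by (simp only: nb_walk_def)
  moreover have "nb_step (last (map dart_rev (rev (d2 # u2)))) d1"
    using assms unfolding nb_step_def by (simp add: last_map)
  moreover have "set (map dart_rev (rev (d2 # u2))) \<subseteq> E \<times> UNIV"
    using w2 unfolding nb_walk_def by (auto simp: dart_rev_def mem_Times_iff)
  ultimately show ?thesis
    using w1 unfolding nb_walk_def by (simp add: successively_append_iff)
qed

lemma not_distinct_walk_if_same_end:
  "nb_walk w1 \<Longrightarrow> nb_walk w2 \<Longrightarrow> w1 \<noteq> w2 \<Longrightarrow> walk_end w1 = walk_end w2 \<Longrightarrow>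
   \<exists>w. nb_walk w \<and> \<not> distinct (walk_verts w) \<and> length w \<le> length w1 + length w2"
proof (induction w1 arbitrary: w2)
  case Nil
  then have "w2 \<noteq> []" "walk_end w2 = v" using walk_end_Nil by metis+
  then show ?case
    using Nil.prems(2) not_distinct_if_closed by (intro exI[of _ w2]) simp
next
  case (Cons d1 u1)
  show ?case
  proof (cases "w2 = []")
    case True
    then have "walk_end (d1 # u1) = v" using Cons.prems(4) walk_end_Nil by metis
    then show ?thesis
      using Cons.prems(1) not_distinct_if_closed by (intro exI[of _ "d1 # u1"]) simp
  next
    case False
    then obtain d2 u2 where w2: "w2 = d2 # u2" by (cases w2) auto
    show ?thesis
    proof (cases "d1 = d2")
      case True
      have "nb_walk u1" "nb_walk u2"
        using Cons.prems(1,2) w2 by (simp_all add: nb_walk_Cons)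
      moreover have "u1 \<noteq> u2" using Cons.prems(3) w2 True by simp
      moreover have "walk_end u1 = walk_end u2"
        using Cons.prems(1,2) w2 True by (simp add: nb_walk_Cons)
      ultimately obtain w where "nb_walk w" "\<not> distinct (walk_verts w)"
        "length w \<le> length u1 + length u2"
        using Cons.IH by blast
      then show ?thesis using w2 by (intro exI[of _ w]) simp
    next
      case False
      define w where "w = map dart_rev (rev w2) @ d1 # u1"
      have "hd w = dart_rev (last w2)" using w2 by (simp add: w_def hd_map hd_rev)
      then have "walk_end w = v"
        using Cons.prems(2) w2 by (simp add: w_def walk_end_def nb_walk_def)
      then have "\<not> distinct (walk_verts w)" by (intro not_distinct_if_closed) (simp add: w_def)
      moreover have "dart_head d1 = dart_head d2"
        using Cons.prems(4) w2 by simp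
      then have "nb_walk w"
        unfolding w_def w2 using nb_walk_splice Cons.prems(1,2) False w2 by blast
      ultimately show ?thesis using w2 by (intro exI[of _ w]) (simp add: w_def)
    qed
  qed
qed

definition walks :: "nat \<Rightarrow> ('e \<times> bool) list set" where
  "walks j = {w. nb_walk w \<and> length w = j}"

definition darts_from :: "'v \<Rightarrow> ('e \<times> bool) set" where
  "darts_from x = {d \<in> E \<times> UNIV. dart_tail d = x}"

definition extensions :: "('e \<times> bool) list \<Rightarrow> ('e \<times> bool) set" where
  "extensions w = {d \<in> darts_from (walk_end w). w \<noteq> [] \<longrightarrow> d \<noteq> dart_rev (hd w)}"

lemma finite_darts: "finite (E \<times> (UNIV :: bool set))"
  using multigraph by (simp add: multigraph_def)

lemma finite_walks: "finite (walks j)"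
proof -
  have "finite {w. set w \<subseteq> E \<times> (UNIV :: bool set) \<and> length w = j}"
    using finite_darts by (rule finite_lists_length_eq)
  then show ?thesis by (rule finite_subset[rotated]) (auto simp: walks_def nb_walk_def)
qed

lemma walks_0: "walks 0 = {[]}"
  by (auto simp: walks_def nb_walk_def)

lemma finite_darts_from: "finite (darts_from x)"
  using finite_darts by (rule finite_subset[rotated]) (auto simp: darts_from_def)

lemma card_darts_from: "card (darts_from x) = degree E ends x"
proof -
  have darts: "darts_from x = (\<lambda>e. (e, True)) ` {e\<in>E. fst (ends e) = x} \<union>
                              (\<lambda>e. (e, False)) ` {e\<in>E. snd (ends e) = x}"
    by (auto simp: darts_from_def dart_tail_def split: if_splits)
  have "finite {e\<in>E. fst (ends e) = x}" "finite {e\<in>E. snd (ends e) = x}"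
    using multigraph by (simp_all add: multigraph_def)
  then show ?thesis
    unfolding darts degree_def by (subst card_Un_disjoint) (auto simp: card_image inj_on_def)
qed

lemma Cons_in_walks_Suc: "w \<in> walks j \<Longrightarrow> d \<in> extensions w \<Longrightarrow> d # w \<in> walks (Suc j)"
  by (auto simp: walks_def extensions_def darts_from_def nb_walk_Cons)

lemma sum_card_extensions_le: "(\<Sum>w\<in>walks j. card (extensions w)) \<le> card (walks (Suc j))"
proof -
  have "finite (Sigma (walks j) extensions)"
    using finite_walks finite_darts_from by (auto simp: extensions_def)
  then have "(\<Sum>w\<in>walks j. card (extensions w)) = card (Sigma (walks j) extensions)"
    using finite_walks finite_darts_from by (subst card_SigmaI) (auto simp: extensions_def)
  also have "\<dots> \<le> card (walks (Suc j))"
    using Cons_in_walks_Suc finite_walks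
    by (intro card_inj_on_le[of "\<lambda>(w, d). d # w"]) (auto simp: inj_on_def)
  finally show ?thesis .
qed

end

lemma Suc_le_4_log2_small:
  fixes s :: nat assumes "2 \<le> s" "s \<le> 7"
  shows "real (Suc s) \<le> 4 * log 2 (real s)"
proof (cases "4 \<le> s")
  case True
  then have "2 \<le> log 2 (real s)" using le_log2_of_power[of 2 s] by simp
  then show ?thesis using assms(2) by simp
next
  case False
  then have "s = 2 \<or> s = 3" using assms(1) by auto
  moreover have "1 \<le> log 2 (real s)" using le_log2_of_power[of 1 s] assms(1) by simp
  ultimately show ?thesis by auto
qed

lemma le_4_log2_if_power_le:
  fixes s m :: nat assumes "2 ^ m \<le> s" "8 \<le> s"
  shows "real (2 * m + 5) \<le> 4 * log 2 (real s)"
proof -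
  have "real m \<le> log 2 (real s)" using le_log2_of_power[OF assms(1)] .
  moreover have "3 \<le> log 2 (real s)" using le_log2_of_power[of 3 s] assms(2) by simp
  ultimately show ?thesis by simp
qed

locale rooted_multigraph_min_degree = rooted_multigraph +
  assumes root_degree: "degree E ends v \<ge> 1"
    and degree_ge_3: "\<forall>u \<in> V - {v}. degree E ends u \<ge> 3"
begin

lemma card_extensions_Nil: "1 \<le> card (extensions [])"
  using root_degree card_darts_from by (simp add: extensions_def)

lemma card_extensions_ge_2:
  assumes w: "w \<in> walks (Suc i)" and dist: "distinct (walk_verts w)"
  shows "2 \<le> card (extensions w)"
proof -
  obtain a u where w_Cons: "w = a # u" using w by (cases w) (auto simp: walks_def)
  have a_E: "fst a \<in> E" using w w_Cons by (simp add: walks_def nb_walk_Cons)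
  have "dart_head a \<noteq> v" using not_distinct_if_closed[of w] dist w_Cons by auto
  then have "3 \<le> degree E ends (dart_head a)" using degree_ge_3 dart_head_in_V[OF a_E] by auto
  moreover have "extensions w = darts_from (dart_head a) - {dart_rev a}"
    using w_Cons by (auto simp: extensions_def)
  moreover have "dart_rev a \<in> darts_from (dart_head a)"
    using a_E by (auto simp: darts_from_def mem_Times_iff)
  ultimately show ?thesis using card_darts_from finite_darts_from by simp
qed

lemma card_walks_ge_power:
  "(\<And>w. nb_walk w \<Longrightarrow> length w \<le> j \<Longrightarrow> distinct (walk_verts w)) \<Longrightarrow>
   2 ^ j \<le> card (walks (Suc j))"
proof (induction j)
  case 0
  show ?case using sum_card_extensions_le[of 0] card_extensions_Nil by (simp add: walks_0)
next
  case (Suc i)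
  have "2 * card (walks (Suc i)) = (\<Sum>w\<in>walks (Suc i). 2)" by simp
  also have "\<dots> \<le> (\<Sum>w\<in>walks (Suc i). card (extensions w))"
    using Suc.prems card_extensions_ge_2 by (intro sum_mono) (auto simp: walks_def)
  also have "\<dots> \<le> card (walks (Suc (Suc i)))" by (rule sum_card_extensions_le)
  finally show ?case using Suc by simp
qed

lemma has_lollipop_or_many_walks: "has_lollipop (Suc j) \<or> 2 ^ j \<le> card (walks (Suc j))"
  using has_lollipop_if_not_distinct has_lollipop_mono card_walks_ge_power
  by (metis Suc_le_mono)

lemma has_lollipop_Suc_card: "has_lollipop (Suc (card V))"
proof -
  obtain j where j: "card V = Suc j" using finite_V root_in_V by (metis card_Suc_Diff1)
  consider "has_lollipop (Suc j)" | "2 ^ j \<le> card (walks (Suc j))"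
    using has_lollipop_or_many_walks by blast
  then show ?thesis
  proof cases
    case 1
    then show ?thesis using j by (auto elim: has_lollipop_mono)
  next
    case 2
    then have "walks (Suc j) \<noteq> {}" by (intro notI) simp
    then obtain w where w: "nb_walk w" "length w = card V"
      using j by (auto simp: walks_def)
    have "\<not> distinct (walk_verts w)"
    proof
      assume "distinct (walk_verts w)"
      then have "card (set (walk_verts w)) = Suc (card V)" using w(2) by (simp add: distinct_card)
      moreover have "card (set (walk_verts w)) \<le> card V"
        using card_mono[OF finite_V walk_verts_subset[OF w(1)]] .
      ultimately show False by simp
    qed
    then show ?thesis using has_lollipop_if_not_distinct w by fastforce
  qed
qed

lemma has_lollipop_if_card_less_power:
  assumes "card V < 2 ^ j"
  shows "has_lollipop (2 * j + 3)"
proof -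
  consider "has_lollipop (Suc j)" | "2 ^ j \<le> card (walks (Suc j))"
    using has_lollipop_or_many_walks by blast
  then show ?thesis
  proof cases
    case 1
    then show ?thesis by (rule has_lollipop_mono) simp
  next
    case 2
    have "\<not> inj_on walk_end (walks (Suc j))"
    proof
      assume "inj_on walk_end (walks (Suc j))"
      moreover have "walk_end ` walks (Suc j) \<subseteq> V"
        using walk_end_in_V by (auto simp: walks_def)
      ultimately have "card (walks (Suc j)) \<le> card V" using finite_V by (rule card_inj_on_le)
      then show False using 2 assms by simp
    qed
    then obtain w1 w2 where "nb_walk w1" "nb_walk w2" "length w1 = Suc j" "length w2 = Suc j"
      "w1 \<noteq> w2" "walk_end w1 = walk_end w2"
      by (auto simp: inj_on_def walks_def)
    then obtain w where "nb_walk w" "\<not> distinct (walk_verts w)" "length w \<le> 2 * j + 2"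
      using not_distinct_walk_if_same_end by fastforce
    then show ?thesis using has_lollipop_if_not_distinct has_lollipop_mono by fastforce
  qed
qed

lemma has_lollipop_log2:
  assumes "2 \<le> card V"
  shows "\<exists>N. has_lollipop N \<and> real N \<le> 4 * log 2 (real (card V))"
proof (cases "card V \<le> 7")
  case True
  then show ?thesis using has_lollipop_Suc_card Suc_le_4_log2_small assms by blast
next
  case False
  then obtain m where m: "2 ^ m \<le> card V" "card V < 2 ^ Suc m"
    using ex_power_ivl1[of 2 "card V"] by auto
  have "has_lollipop (2 * m + 5)"
    using has_lollipop_if_card_less_power[OF m(2)] by (simp add: add.commute)
  moreover have "real (2 * m + 5) \<le> 4 * log 2 (real (card V))"
    using le_4_log2_if_power_le[OF m(1)] False by simp
  ultimately show ?thesis by blast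
qed

end

theorem claim2p1:
  fixes V :: "'v set" and E :: "'e set" and ends :: "'e \<Rightarrow> 'v \<times> 'v" and v :: 'v
  assumes "multigraph V E ends"
    and "card V \<ge> 2"
    and "v \<in> V"
    and "degree E ends v \<ge> 1"
    and "\<forall>u \<in> V - {v}. degree E ends u \<ge> 3"
  shows "\<exists>ps cs. is_path V E ends ps \<and> is_cycle V E ends cs \<and>
           hd ps = v \<and> last ps = hd cs \<and> length ps \<ge> 1 \<and> length cs \<ge> 1 \<and>
           real (length ps + length cs) \<le> 4 * log 2 (real (card V))"
proof -
  interpret rooted_multigraph_min_degree V E ends v
    using assms by unfold_locales
  obtain N where "has_lollipop N" and N: "real N \<le> 4 * log 2 (real (card V))"
    using has_lollipop_log2 assms(2) by blast
  then obtain ps cs where "is_path V E ends ps" "is_cycle V E ends cs"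
    "hd ps = v" "last ps = hd cs" "length ps \<ge> 1" "length cs \<ge> 1"
    and "length ps + length cs \<le> N"
    unfolding has_lollipop_def by blast
  moreover from this(7) have "real (length ps + length cs) \<le> 4 * log 2 (real (card V))"
    using N by linarith
  ultimately show ?thesis by blast
qed

end
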